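(* Let $G$ be a finite abelian group with $|G|>1$ and let $p(G)$ be the smallest prime dividing $|G|$. If $B\subset G$ is balanced, then $|B|\geqslant\log_2 p(G)+1$.
   Context: A set $B\subset G$ is balanced if for every $b\in B$ there exist distinct $b_1,b_2\in B$ with $2b=b_1+b_2$. *)

theory Defs
  imports Complex_Main "HOL-Computational_Algebra.Primes"
begin

definition balanced :: "'a::ab_group_add set \<Rightarrow> bool" where
  "balanced B \<longleftrightarrow> (\<forall>b\<in>B. \<exists>b1\<in>B. \<exists>b2\<in>B. b1 \<noteq> b2 \<and> b + b = b1 + b2)"

definition smallest_prime_divisor :: "nat \<Rightarrow> nat" where
  "smallest_prime_divisor n = Min {p. prime p \<and> p dvd n}"

end

(*
  Pass to a minimal balanced subset C, fix r in C and put y x = x - r. Then y r = 0 and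
  2 y(i) = y(j i) + y(k i) for the two witnesses j i, k i of each i in C. Minimality makes
  every element reach r along the edges i -> j i, k i, so chip firing (replace two chips
  on some i /= r by one chip on j i and one on k i) terminates: with rho the distance to r
  and K its maximum, one of j i, k i is closer to r than i, which makes the total weight
  of the chips, 2 * 3^K - 3^(K - rho) per chip, strictly decrease. Firing preserves the
  value of a configuration, so every multiple of y(a), a = j r, is a subset sum of y over
  C - {r}. There are at most 2^(|C| - 1) of those, so the nonzero element y(a) has some
  order m <= 2^(|B| - 1), and a prime dividing m divides |G|, whence p(G) <= 2^(|B| - 1).
*)

theory Submission
  imports Defs
begin

(* The library's of_nat n * y needs a ring; here n y is the n-fold sum in a monoid. *)
fun nat_mul :: "nat \<Rightarrow> 'a::monoid_add \<Rightarrow> 'a" where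
  "nat_mul 0 y = 0"
| "nat_mul (Suc n) y = y + nat_mul n y"

lemma nat_mul_add: "nat_mul (m + n) y = nat_mul m y + nat_mul n y"
  by (induction m) (simp_all add: add.assoc)

lemma nat_mul_mult: "nat_mul (m * n) y = nat_mul m (nat_mul n y)"
  by (induction m) (simp_all add: nat_mul_add)

lemma nat_mul_zero_right [simp]: "nat_mul n 0 = 0"
  by (induction n) simp_all

lemma sum_mset_replicate_mset_nat_mul: "sum_mset (replicate_mset n y) = nat_mul n y"
  by (induction n) simp_all

lemma sum_constant_nat_mul: "finite A \<Longrightarrow> (\<Sum>_\<in>A. y) = nat_mul (card A) y"
  by (induction A rule: finite_induct) simp_all

lemma nat_mul_card_UNIV:
  fixes y :: "'a::{ab_group_add, finite}"
  shows "nat_mul (card (UNIV :: 'a set)) y = 0"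
proof -
  have "(\<Sum>x\<in>UNIV. x + y) = (\<Sum>x\<in>UNIV. x :: 'a)"
    by (rule sum.reindex_bij_witness[where i = "\<lambda>x. x - y" and j = "\<lambda>x. x + y"]) auto
  then show ?thesis
    by (simp add: sum.distrib sum_constant_nat_mul)
qed

lemma nat_mul_gcd_eq_0:
  assumes "nat_mul m y = 0" and "nat_mul n y = 0"
  shows "nat_mul (gcd m n) y = 0"
proof (cases "m = 0")
  case True
  then show ?thesis using assms(2) by simp
next
  case False
  then obtain u v where "m * u = n * v + gcd m n" using bezout_nat by blast
  then have "nat_mul (u * m) y = nat_mul (v * n) y + nat_mul (gcd m n) y"
    by (simp add: nat_mul_add mult.commute)
  then show ?thesis using assms by (simp add: nat_mul_mult)
qed

lemma exists_prime_dvd_if_nat_mul_eq_0: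
  fixes y :: "'a::{ab_group_add, finite}"
  assumes "y \<noteq> 0" and "nat_mul m y = 0"
  obtains q where "prime q" "q dvd m" "q dvd card (UNIV :: 'a set)"
proof -
  have "nat_mul (gcd m (card (UNIV :: 'a set))) y = 0"
    using nat_mul_gcd_eq_0[OF assms(2) nat_mul_card_UNIV] .
  then have "gcd m (card (UNIV :: 'a set)) \<noteq> 1"
    using assms(1) by (metis One_nat_def add_0_right nat_mul.simps)
  then obtain q where "prime q" "q dvd gcd m (card (UNIV :: 'a set))" using prime_factor_nat by blast
  then show thesis using that by simp
qed

lemma nat_mul_eq_0_if_finitely_many_multiples:
  fixes y :: "'a::cancel_comm_monoid_add"
  assumes "finite V" and "\<And>t. nat_mul t y \<in> V"
  obtains m where "0 < m" "m \<le> card V" "nat_mul m y = 0"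
proof -
  have "\<not> inj_on (\<lambda>t. nat_mul t y) {..card V}"
    using card_inj_on_le[of _ "{..card V}" V] assms by fastforce
  then obtain s t where "s < t" "t \<le> card V" "nat_mul s y = nat_mul t y"
    unfolding inj_on_def by (metis atMost_iff linorder_neq_iff order.strict_implies_order order.trans)
  moreover have "nat_mul t y = nat_mul s y + nat_mul (t - s) y"
    using \<open>s < t\<close> nat_mul_add[of s "t - s" y] by simp
  ultimately show thesis using that[of "t - s"] by simp
qed

lemma smallest_prime_divisor_le:
  assumes "n \<noteq> 0" and "prime q" and "q dvd n"
  shows "smallest_prime_divisor n \<le> q"
  unfolding smallest_prime_divisor_def using finite_prime_divisors[OF assms(1)] assms(2,3)
  by (simp add: Min_le)

lemma prime_smallest_prime_divisor:
  assumes "1 < n"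
  shows "prime (smallest_prime_divisor n)"
proof -
  obtain q where "prime q" "q dvd n" using prime_factor_nat assms by (metis less_irrefl)
  then have "{p. prime p \<and> p dvd n} \<noteq> {}" by blast
  moreover have "finite {p. prime p \<and> p dvd n}" using assms by (simp add: finite_prime_divisors)
  ultimately show ?thesis
    unfolding smallest_prime_divisor_def using Min_in by blast
qed

lemma chip_firing_subset_sum:
  fixes y :: "'b \<Rightarrow> 'a::comm_monoid_add" and w :: "'b \<Rightarrow> nat"
  assumes "y r = 0"
    and fire: "\<And>i. i \<in> A - {r} \<Longrightarrow>
      j i \<in> A \<and> k i \<in> A \<and> y i + y i = y (j i) + y (k i) \<and> w (j i) + w (k i) < 2 * w i"
    and "set_mset M \<subseteq> A"
  shows "sum_mset (image_mset y M) \<in> sum y ` Pow (A - {r})"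
  using assms(3)
proof (induction "sum_mset (image_mset w M)" arbitrary: M rule: less_induct)
  case less
  show ?case
  proof (cases "\<exists>i \<in> A - {r}. 2 \<le> count M i")
    case True
    then obtain i where i: "i \<in> A - {r}" "2 \<le> count M i" by blast
    define N where "N = M - {#i, i#}"
    have "{#i, i#} \<subseteq># M" using i(2) by (simp add: subseteq_mset_def)
    then have M: "M = N + {#i, i#}" unfolding N_def by (rule subset_mset.diff_add[symmetric])
    define M' where "M' = N + {#j i, k i#}"
    have "sum_mset (image_mset y M) = (y i + y i) + sum_mset (image_mset y N)"
      using M by (simp add: add.assoc)
    also have "\<dots> = (y (j i) + y (k i)) + sum_mset (image_mset y N)"
      using fire[OF i(1)] by simp
    also have "\<dots> = sum_mset (image_mset y M')"
      by (simp add: M'_def add.assoc)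
    finally have "sum_mset (image_mset y M) = sum_mset (image_mset y M')" .
    moreover have "set_mset M' \<subseteq> A" using fire[OF i(1)] less.prems M by (auto simp: M'_def)
    moreover have "sum_mset (image_mset w M') < sum_mset (image_mset w M)"
      using fire[OF i(1)] M by (simp add: M'_def)
    ultimately show ?thesis using less.hyps by simp
  next
    case False
    then have at_most_one: "count M i \<le> 1" if "i \<in> A - {r}" for i
      using that by (metis One_nat_def Suc_1 not_less_eq_eq)
    define S where "S = set_mset M - {r}"
    have "count M l = (if l \<in> S then 1 else 0)" if "l \<noteq> r" for l
    proof (cases "l \<in># M")
      case True
      then have "count M l \<le> 1" using at_most_one less.prems that by blast
      moreover have "0 < count M l" using True by simp
      ultimately have "count M l = 1" by linarith
      then show ?thesis using that S_def True by simp
    next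
      case False
      then show ?thesis using S_def by (simp add: not_in_iff)
    qed
    then have "filter_mset (\<lambda>l. l \<noteq> r) M = mset_set S"
      unfolding multiset_eq_iff S_def by (simp add: count_mset_set)
    moreover have "sum_mset (image_mset y (filter_mset (\<lambda>l. l = r) M)) = 0"
      using assms(1) by (simp add: sum_mset.neutral)
    moreover have "sum_mset (image_mset y M) = sum_mset (image_mset y (filter_mset (\<lambda>l. l = r) M))
        + sum_mset (image_mset y (filter_mset (\<lambda>l. l \<noteq> r) M))"
      by (subst multiset_partition[of M "\<lambda>l. l = r"]) (simp only: image_mset_union sum_mset.union)
    ultimately have "sum_mset (image_mset y M) = sum y S"
      by (simp add: sum_unfold_sum_mset)
    moreover have "S \<in> Pow (A - {r})" using less.prems S_def by auto
    ultimately show ?thesis by blast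
  qed
qed

lemma exists_descent_weight:
  fixes \<rho> :: "'b \<Rightarrow> nat"
  assumes "finite A"
    and descent: "\<And>i. i \<in> A - {r} \<Longrightarrow> j i \<in> A \<and> k i \<in> A \<and> (\<rho> (j i) < \<rho> i \<or> \<rho> (k i) < \<rho> i)"
  obtains w :: "'b \<Rightarrow> nat" where "\<And>i. i \<in> A - {r} \<Longrightarrow> w (j i) + w (k i) < 2 * w i"
proof -
  define K where "K = Max (\<rho> ` A)"
  define e where "e a = (3::nat) ^ (K - \<rho> a)" for a
  define w where "w a = 2 * 3 ^ K - e a" for a
  have e_bounds: "1 \<le> e a" "e a \<le> 3 ^ K" for a
    unfolding e_def by (simp_all add: power_increasing)
  have "w p + w q < 2 * w i" if "i \<in> A" "\<rho> p < \<rho> i" for i p q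
  proof -
    have "\<rho> i \<le> K" unfolding K_def using assms(1) that(1) by simp
    then have "3 * e i = 3 ^ Suc (K - \<rho> i)" unfolding e_def by simp
    also have "\<dots> \<le> e p" unfolding e_def using \<open>\<rho> i \<le> K\<close> that(2) by (intro power_increasing) auto
    finally show ?thesis unfolding w_def using e_bounds[of p] e_bounds[of q] e_bounds[of i] by linarith
  qed
  then have "w (j i) + w (k i) < 2 * w i" if "i \<in> A - {r}" for i
    using descent[OF that] that by (metis DiffD1 add.commute)
  then show thesis using that by blast
qed

lemma rtrancl_exists_step_closer:
  assumes "(a, r) \<in> E\<^sup>*" and "a \<noteq> r"
  shows "\<exists>b. (a, b) \<in> E \<and> (LEAST n. (b, r) \<in> E ^^ n) < (LEAST n. (a, r) \<in> E ^^ n)"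
proof -
  define d where "d = (LEAST n. (a, r) \<in> E ^^ n)"
  have "(a, r) \<in> E ^^ d"
    using assms(1) unfolding d_def rtrancl_power by (metis LeastI)
  moreover have "d \<noteq> 0" using calculation assms(2) by (metis relpow_0_E)
  ultimately obtain n b where "d = Suc n" "(a, b) \<in> E" "(b, r) \<in> E ^^ n"
    by (metis not0_implies_Suc relpow_Suc_D2)
  moreover have "(LEAST n. (b, r) \<in> E ^^ n) \<le> n" using calculation(3) by (rule Least_le)
  ultimately show ?thesis unfolding d_def by (metis le_imp_less_Suc)
qed

definition minimal_balanced :: "'a::ab_group_add set \<Rightarrow> bool" where
  "minimal_balanced C \<longleftrightarrow> C \<noteq> {} \<and> balanced C \<and> (\<forall>D \<subseteq> C. D \<noteq> {} \<longrightarrow> balanced D \<longrightarrow> D = C)"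

lemma exists_minimal_balanced_subset:
  assumes "finite B" and "B \<noteq> {}" and "balanced B"
  obtains C where "C \<subseteq> B" and "minimal_balanced C"
proof -
  let ?P = "\<lambda>C. C \<subseteq> B \<and> C \<noteq> {} \<and> balanced C"
  obtain C where C: "?P C" and least: "\<And>D. ?P D \<Longrightarrow> card C \<le> card D"
    using ex_has_least_nat[of ?P B card] assms by blast
  have "D = C" if "D \<subseteq> C" "D \<noteq> {}" "balanced D" for D
  proof (rule card_subset_eq)
    show "finite C" using C assms(1) finite_subset by blast
    have "card C \<le> card D" using least[of D] that C by blast
    then show "card D = card C" using card_mono[OF \<open>finite C\<close> \<open>D \<subseteq> C\<close>] by simp
  qed fact
  then show thesis using that C unfolding minimal_balanced_def by blast
qed

lemma minimal_balanced_reaches: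
  assumes "minimal_balanced C" and "r \<in> C" and "a \<in> C"
    and jk: "\<And>b. b \<in> C \<Longrightarrow> j b \<in> C \<and> k b \<in> C \<and> j b \<noteq> k b \<and> b + b = j b + k b"
  shows "(a, r) \<in> {(b, c). c = j b \<or> c = k b}\<^sup>*"
proof (rule ccontr)
  let ?E = "{(b, c). c = j b \<or> c = k b}"
  define U where "U = {b \<in> C. (b, r) \<notin> ?E\<^sup>*}"
  assume "(a, r) \<notin> ?E\<^sup>*"
  then have "U \<noteq> {}" using assms(3) U_def by blast
  moreover have "j b \<in> U \<and> k b \<in> U" if "b \<in> U" for b
    using that jk unfolding U_def by (auto intro: converse_rtrancl_into_rtrancl)
  then have "balanced U"
    unfolding balanced_def using jk U_def by blast
  moreover have "U \<subseteq> C" unfolding U_def by blast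
  ultimately have "U = C"
    using assms(1) unfolding minimal_balanced_def by blast
  then show False using assms(2) unfolding U_def by auto
qed

lemma minimal_balanced_multiples_in_subset_sums:
  assumes "finite C" and "minimal_balanced C" and "r \<in> C"
  obtains a where "a \<in> C" "a \<noteq> r"
    "\<And>t. nat_mul t (a - r) \<in> (\<lambda>S. \<Sum>x\<in>S. x - r) ` Pow (C - {r})"
proof -
  obtain j k where jk: "\<And>b. b \<in> C \<Longrightarrow> j b \<in> C \<and> k b \<in> C \<and> j b \<noteq> k b \<and> b + b = j b + k b"
    using assms(2) unfolding minimal_balanced_def balanced_def by metis
  let ?E = "{(b, c). c = j b \<or> c = k b}"
  define \<rho> where "\<rho> b = (LEAST n. (b, r) \<in> ?E ^^ n)" for b
  have "j i \<in> C \<and> k i \<in> C \<and> (\<rho> (j i) < \<rho> i \<or> \<rho> (k i) < \<rho> i)" if "i \<in> C - {r}" for i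
    using jk[of i] rtrancl_exists_step_closer[OF minimal_balanced_reaches[OF assms(2,3) _ jk], of i] that
    unfolding \<rho>_def by auto
  then obtain w :: "'a \<Rightarrow> nat" where w: "\<And>i. i \<in> C - {r} \<Longrightarrow> w (j i) + w (k i) < 2 * w i"
    using exists_descent_weight[OF assms(1)] by blast
  have chips: "sum_mset (image_mset (\<lambda>x. x - r) M) \<in> (\<lambda>S. \<Sum>x\<in>S. x - r) ` Pow (C - {r})"
    if "set_mset M \<subseteq> C" for M
  proof (rule chip_firing_subset_sum[where j = j and k = k and w = w])
    fix i assume "i \<in> C - {r}"
    then show "j i \<in> C \<and> k i \<in> C \<and> (i - r) + (i - r) = (j i - r) + (k i - r)
        \<and> w (j i) + w (k i) < 2 * w i"
      using jk w by (simp add: algebra_simps)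
  qed (use that in simp_all)
  have "j r \<noteq> r" using jk[OF assms(3)] by (metis add_left_cancel)
  moreover have "nat_mul t (j r - r) \<in> (\<lambda>S. \<Sum>x\<in>S. x - r) ` Pow (C - {r})" for t
    using chips[of "replicate_mset t (j r)"] jk[OF assms(3)]
    by (simp add: image_replicate_mset sum_mset_replicate_mset_nat_mul)
  ultimately show thesis using that jk[OF assms(3)] by blast
qed

lemma balanced_has_element_of_small_order:
  fixes B :: "'a::ab_group_add set"
  assumes "finite B" and "B \<noteq> {}" and "balanced B"
  obtains y :: 'a and m where "y \<noteq> 0" "0 < m" "m \<le> 2 ^ (card B - 1)" "nat_mul m y = 0"
proof -
  obtain C where "C \<subseteq> B" "minimal_balanced C"
    using exists_minimal_balanced_subset[OF assms] .
  moreover from this obtain r where "r \<in> C" unfolding minimal_balanced_def by blast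
  moreover have "finite C" using \<open>C \<subseteq> B\<close> assms(1) finite_subset by blast
  ultimately obtain a where a: "a \<in> C" "a \<noteq> r"
    and multiples: "\<And>t. nat_mul t (a - r) \<in> (\<lambda>S. \<Sum>x\<in>S. x - r) ` Pow (C - {r})"
    using minimal_balanced_multiples_in_subset_sums by blast
  let ?V = "(\<lambda>S. \<Sum>x\<in>S. x - r) ` Pow (C - {r})"
  have "card ?V \<le> card (Pow (C - {r}))"
    using \<open>finite C\<close> by (intro card_image_le) simp
  also have "\<dots> = 2 ^ (card C - 1)"
    using \<open>finite C\<close> \<open>r \<in> C\<close> by (simp add: card_Pow)
  also have "\<dots> \<le> 2 ^ (card B - 1)"
    using card_mono[OF assms(1) \<open>C \<subseteq> B\<close>] by (intro power_increasing) auto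
  finally have "card ?V \<le> 2 ^ (card B - 1)" .
  moreover obtain m where "0 < m" "m \<le> card ?V" "nat_mul m (a - r) = 0"
    using nat_mul_eq_0_if_finitely_many_multiples[OF _ multiples] \<open>finite C\<close> by blast
  ultimately show thesis using that[of "a - r" m] a(2) by simp
qed

theorem corollary4p8:
  fixes B :: "'a::{ab_group_add, finite} set"
  assumes "card (UNIV :: 'a set) > 1"
    and "B \<noteq> {}"
    and "balanced B"
  shows "real (card B) \<ge> log 2 (real (smallest_prime_divisor (card (UNIV :: 'a set)))) + 1"
proof -
  let ?p = "smallest_prime_divisor (card (UNIV :: 'a set))"
  obtain y :: 'a and m where "y \<noteq> 0" "0 < m" "m \<le> 2 ^ (card B - 1)" "nat_mul m y = 0"
    using balanced_has_element_of_small_order[OF finite assms(2,3)] .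
  moreover obtain q where "prime q" "q dvd m" "q dvd card (UNIV :: 'a set)"
    using exists_prime_dvd_if_nat_mul_eq_0[OF \<open>y \<noteq> 0\<close> \<open>nat_mul m y = 0\<close>] .
  moreover have "?p \<le> q"
    using smallest_prime_divisor_le[OF _ \<open>prime q\<close> \<open>q dvd card UNIV\<close>] assms(1) by simp
  ultimately have "?p \<le> 2 ^ (card B - 1)"
    using dvd_imp_le[of q m] by simp
  moreover have "0 < ?p"
    using prime_smallest_prime_divisor[OF assms(1)] prime_gt_0_nat by blast
  ultimately have "log 2 (real ?p) \<le> real (card B - 1)"
    by (rule log2_of_power_le)
  moreover have "0 < card B" using assms(2) by (simp add: card_gt_0_iff)
  ultimately show ?thesis by (simp add: of_nat_diff)
qed

end
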